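(* Let $n,m\ge 1$, let $\boldsymbol{W}=(w_{ij})\in\mathbb{R}^{n\times n}$ be a symmetric matrix with non-negative entries, let $\boldsymbol{S}=(s_{kr})\in[0,1]^{m\times m}$ be symmetric with $s_{kk}=0$ for all $k$, let $\boldsymbol{\gamma}=(\gamma_1,\dots,\gamma_m)\in\mathbb{R}^m$, $\boldsymbol{\rho}=(\rho_1,\dots,\rho_m)\in[\frac{\pi}{4},\frac{\pi}{2})^m$ and $\alpha\in\mathbb{R}$. Consider the HoMTask Hopfield network $\mathcal{H}=\langle \boldsymbol{W},\boldsymbol{\gamma},\boldsymbol{\rho},\boldsymbol{S}\rangle$ whose states are matrices $\boldsymbol{X}=(x_{ik})$, $1\le i\le n$, $1\le k\le m$, with $x_{ik}\in\{\sin\rho_k,-\cos\rho_k\}$, with energy $$E_{\mathcal{H}}(\boldsymbol{X})=\sum_{k=1}^m\Big(-\tfrac12 {\boldsymbol{x}^{(k)}}^T\boldsymbol{W}\boldsymbol{x}^{(k)}+\gamma_k\sum_{i=1}^n x_{ik}+\tfrac{\alpha}{2}\Big(S_k\sum_{i=1}^n x_{ik}^2-\sum_{r\ne k}s_{kr}\sum_{i=1}^n x_{ik}x_{ir}\Big)\Big),$$ where $\boldsymbol{x}^{(k)}$ is the $k$-th column of $\boldsymbol{X}$ and $S_k=\sum_{r=1}^m s_{kr}$. Under the asynchronous dynamics in which, at each time step, a single neuron $(i,k)$ is updated by $$x_{ik}(t+1)=\begin{cases}\sin\rho_k & \text{if } \phi_{ik}(t)>0,\\ -\cos\rho_k & \text{if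 } \phi_{ik}(t)\le 0,\end{cases}\qquad \phi_{ik}(t)=\sum_{j=1}^n w_{ij}x_{jk}(t)-\theta_{ik}+\alpha\sum_{r\ne k}s_{kr}x_{ir}(t),$$ with $\theta_{ik}=\gamma_k+\frac{\alpha S_k}{2}(\sin\rho_k-\cos\rho_k)$ (all other neurons unchanged, and all $nm$ neurons updated in random order in each block of $nm$ consecutive steps), the network, starting from any initial state, eventually reaches a stable state (a state that no further neuron update changes), and this stable state is a local minimum of $E_{\mathcal{H}}$.
   Context: A HoMTask network consists of $m$ copies (one per task $k$) of a Hopfield network on the same $n$ neurons with weights $\boldsymbol{W}$; copy $k$ has neuron activation values $\{\sin\rho_k,-\cos\rho_k\}$ and activation threshold $\gamma_k$, and neuron $i$ of copy $k$ is additionally coupled to neuron $i$ of copy $r$ with weight proportional to $\alpha s_{kr}$. Each update does not increase the energy, where a local minimum is understood as a state from which no single-neuron update (by the rule above) decreases the energy. *)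

theory Defs
  imports Complex_Main
begin

text \<open>HoMTask Hopfield network. Indices are 0-based: neurons i < n, tasks k < m.
  A state is X :: nat \<Rightarrow> nat \<Rightarrow> real, X i k = x_ik.\<close>

definition Ssum :: "nat \<Rightarrow> (nat \<Rightarrow> nat \<Rightarrow> real) \<Rightarrow> nat \<Rightarrow> real" where
  "Ssum m S k = (\<Sum>r<m. S k r)"

definition hm_state :: "nat \<Rightarrow> nat \<Rightarrow> (nat \<Rightarrow> real) \<Rightarrow> (nat \<Rightarrow> nat \<Rightarrow> real) \<Rightarrow> bool" where
  "hm_state n m \<rho> X \<longleftrightarrow> (\<forall>i<n. \<forall>k<m. X i k = sin (\<rho> k) \<or> X i k = - cos (\<rho> k))"

definition hm_energy ::
  "nat \<Rightarrow> nat \<Rightarrow> (nat \<Rightarrow> nat \<Rightarrow> real) \<Rightarrow> (nat \<Rightarrow> real) \<Rightarrow> (nat \<Rightarrow> nat \<Rightarrow> real) \<Rightarrow> real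
   \<Rightarrow> (nat \<Rightarrow> nat \<Rightarrow> real) \<Rightarrow> real" where
  "hm_energy n m W \<gamma> S \<alpha> X =
     (\<Sum>k<m. - (1/2) * (\<Sum>i<n. \<Sum>j<n. X i k * W i j * X j k)
            + \<gamma> k * (\<Sum>i<n. X i k)
            + (\<alpha> / 2) * (Ssum m S k * (\<Sum>i<n. (X i k)^2)
                        - (\<Sum>r\<in>{..<m} - {k}. S k r * (\<Sum>i<n. X i k * X i r))))"

definition hm_theta ::
  "nat \<Rightarrow> (nat \<Rightarrow> real) \<Rightarrow> (nat \<Rightarrow> real) \<Rightarrow> (nat \<Rightarrow> nat \<Rightarrow> real) \<Rightarrow> real \<Rightarrow> nat \<Rightarrow> real" where
  "hm_theta m \<gamma> \<rho> S \<alpha> k = \<gamma> k + \<alpha> * Ssum m S k / 2 * (sin (\<rho> k) - cos (\<rho> k))"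

definition hm_phi ::
  "nat \<Rightarrow> nat \<Rightarrow> (nat \<Rightarrow> nat \<Rightarrow> real) \<Rightarrow> (nat \<Rightarrow> real) \<Rightarrow> (nat \<Rightarrow> real) \<Rightarrow> (nat \<Rightarrow> nat \<Rightarrow> real)
   \<Rightarrow> real \<Rightarrow> (nat \<Rightarrow> nat \<Rightarrow> real) \<Rightarrow> nat \<Rightarrow> nat \<Rightarrow> real" where
  "hm_phi n m W \<gamma> \<rho> S \<alpha> X i k =
     (\<Sum>j<n. W i j * X j k) - hm_theta m \<gamma> \<rho> S \<alpha> k
     + \<alpha> * (\<Sum>r\<in>{..<m} - {k}. S k r * X i r)"

definition hm_update ::
  "nat \<Rightarrow> nat \<Rightarrow> (nat \<Rightarrow> nat \<Rightarrow> real) \<Rightarrow> (nat \<Rightarrow> real) \<Rightarrow> (nat \<Rightarrow> real) \<Rightarrow> (nat \<Rightarrow> nat \<Rightarrow> real)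
   \<Rightarrow> real \<Rightarrow> (nat \<Rightarrow> nat \<Rightarrow> real) \<Rightarrow> nat \<Rightarrow> nat \<Rightarrow> (nat \<Rightarrow> nat \<Rightarrow> real)" where
  "hm_update n m W \<gamma> \<rho> S \<alpha> X i k =
     (\<lambda>i' k'. if i' = i \<and> k' = k then
                 (if hm_phi n m W \<gamma> \<rho> S \<alpha> X i k > 0 then sin (\<rho> k) else - cos (\<rho> k))
               else X i' k')"

primrec hm_traj ::
  "nat \<Rightarrow> nat \<Rightarrow> (nat \<Rightarrow> nat \<Rightarrow> real) \<Rightarrow> (nat \<Rightarrow> real) \<Rightarrow> (nat \<Rightarrow> real) \<Rightarrow> (nat \<Rightarrow> nat \<Rightarrow> real)
   \<Rightarrow> real \<Rightarrow> (nat \<Rightarrow> nat \<times> nat) \<Rightarrow> (nat \<Rightarrow> nat \<Rightarrow> real) \<Rightarrow> nat \<Rightarrow> (nat \<Rightarrow> nat \<Rightarrow> real)" where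
  "hm_traj n m W \<gamma> \<rho> S \<alpha> \<sigma> X0 0 = X0"
| "hm_traj n m W \<gamma> \<rho> S \<alpha> \<sigma> X0 (Suc t) =
     hm_update n m W \<gamma> \<rho> S \<alpha> (hm_traj n m W \<gamma> \<rho> S \<alpha> \<sigma> X0 t) (fst (\<sigma> t)) (snd (\<sigma> t))"

definition hm_schedule :: "nat \<Rightarrow> nat \<Rightarrow> (nat \<Rightarrow> nat \<times> nat) \<Rightarrow> bool" where
  "hm_schedule n m \<sigma> \<longleftrightarrow>
     (\<forall>b. bij_betw (\<lambda>t. \<sigma> (b * (n * m) + t)) {..<n * m} ({..<n} \<times> {..<m}))"

definition hm_stable ::
  "nat \<Rightarrow> nat \<Rightarrow> (nat \<Rightarrow> nat \<Rightarrow> real) \<Rightarrow> (nat \<Rightarrow> real) \<Rightarrow> (nat \<Rightarrow> real) \<Rightarrow> (nat \<Rightarrow> nat \<Rightarrow> real)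
   \<Rightarrow> real \<Rightarrow> (nat \<Rightarrow> nat \<Rightarrow> real) \<Rightarrow> bool" where
  "hm_stable n m W \<gamma> \<rho> S \<alpha> X \<longleftrightarrow>
     (\<forall>i<n. \<forall>k<m. hm_update n m W \<gamma> \<rho> S \<alpha> X i k = X)"

definition hm_local_min ::
  "nat \<Rightarrow> nat \<Rightarrow> (nat \<Rightarrow> nat \<Rightarrow> real) \<Rightarrow> (nat \<Rightarrow> real) \<Rightarrow> (nat \<Rightarrow> real) \<Rightarrow> (nat \<Rightarrow> nat \<Rightarrow> real)
   \<Rightarrow> real \<Rightarrow> (nat \<Rightarrow> nat \<Rightarrow> real) \<Rightarrow> bool" where
  "hm_local_min n m W \<gamma> \<rho> S \<alpha> X \<longleftrightarrow>
     (\<forall>i<n. \<forall>k<m. \<not> hm_energy n m W \<gamma> S \<alpha> (hm_update n m W \<gamma> \<rho> S \<alpha> X i k)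
                      < hm_energy n m W \<gamma> S \<alpha> X)"

end

theory Submission
  imports Defs "HOL-Library.Product_Lexorder" "HOL-Library.Equipollence"
begin

text \<open>Changing the single entry \<open>x\<^sub>i\<^sub>k\<close> by \<open>d\<close> changes the energy by
  \<open>-d \<phi>\<^sub>i\<^sub>k - w\<^sub>i\<^sub>i d\<^sup>2/2\<close>: the symmetry of \<open>W\<close> and \<open>S\<close> doubles the linear terms, and the
  quadratic self-coupling term is absorbed by the threshold \<open>\<theta>\<^sub>i\<^sub>k\<close>, because an entry that
  actually changes moves between the two levels, whose sum is \<open>sin \<rho>\<^sub>k - cos \<rho>\<^sub>k\<close>.
  The update rule makes \<open>d\<close> and \<open>\<phi>\<^sub>i\<^sub>k\<close> of the same sign, so the energy never increases,
  and strictly decreases unless the neuron falls from \<open>sin \<rho>\<^sub>k\<close> to \<open>-cos \<rho>\<^sub>k\<close>, which lowers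
  the total activation. Hence every effective update strictly lowers the pair (energy, total
  activation) lexicographically; as the states reachable from \<open>X\<^sub>0\<close> are finitely many, the
  trajectory becomes constant, and a state left unchanged by a full block of the schedule,
  which updates every neuron, is stable.\<close>

definition bump :: "(nat \<Rightarrow> nat \<Rightarrow> real) \<Rightarrow> nat \<Rightarrow> nat \<Rightarrow> real \<Rightarrow> nat \<Rightarrow> nat \<Rightarrow> real" where
  "bump X i k d = (\<lambda>i' k'. X i' k' + (if k' = k \<and> i' = i then d else 0))"

lemma sum_if_eq_if_sum:
  "(\<Sum>j\<in>A. if P then f j else 0) = (if P then sum f A else (0::'a::comm_monoid_add))"
  by simp

lemma sum_grid_delta:
  fixes n m :: nat
  assumes "i < n" and "k < m"
  shows "(\<Sum>k'<m. g k' * (\<Sum>i'<n. if k' = k \<and> i' = i then c else 0)) = g k * (c::real)"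
proof -
  have "(\<Sum>i'<n. if k' = k \<and> i' = i then c else 0) = (if k' = k then c else 0)" for k'
    using assms by (cases "k' = k") (simp_all add: sum.delta)
  then show ?thesis
    using assms by (simp add: if_distrib[of "\<lambda>x. _ * x"] cong: if_cong)
qed

lemma sum_entrywise_bump:
  fixes F :: "nat \<Rightarrow> nat \<Rightarrow> real \<Rightarrow> real"
  assumes "i < n" and "k < m"
  shows "(\<Sum>k'<m. g k' * (\<Sum>i'<n. F i' k' (bump X i k d i' k')))
       = (\<Sum>k'<m. g k' * (\<Sum>i'<n. F i' k' (X i' k'))) + g k * (F i k (X i k + d) - F i k (X i k))"
proof -
  have "F i' k' (bump X i k d i' k') = F i' k' (X i' k')
          + (if k' = k \<and> i' = i then F i k (X i k + d) - F i k (X i k) else 0)" for i' k'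
    by (auto simp: bump_def)
  then show ?thesis
    using sum_grid_delta[OF assms] by (simp add: sum.distrib distrib_left)
qed

lemma quadratic_form_bump:
  fixes W :: "nat \<Rightarrow> nat \<Rightarrow> real" and n m :: nat
  assumes "i < n" and "k < m" and W_sym: "\<forall>i<n. \<forall>j<n. W i j = W j i"
  shows "(\<Sum>k'<m. \<Sum>i'<n. \<Sum>j<n. bump X i k d i' k' * W i' j * bump X i k d j k')
       = (\<Sum>k'<m. \<Sum>i'<n. \<Sum>j<n. X i' k' * W i' j * X j k')
         + 2 * d * (\<Sum>j<n. W i j * X j k) + W i i * d\<^sup>2"
proof -
  have "bump X i k d i' k' * W i' j * bump X i k d j k'
     = X i' k' * W i' j * X j k' + (if k' = k then (if i' = i then d * W i j * X j k else 0) else 0)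
       + (if k' = k then (if j = i then d * W i' i * X i' k else 0) else 0)
       + (if k' = k then (if i' = i then (if j = i then d * W i i * d else 0) else 0) else 0)"
    for i' j k' by (auto simp: bump_def algebra_simps)
  moreover have "(\<Sum>i'<n. W i' i * X i' k) = (\<Sum>j<n. W i j * X j k)"
    using W_sym assms(1) by (intro sum.cong) auto
  ultimately show ?thesis
    using assms(1,2)
    by (simp add: sum.distrib sum_if_eq_if_sum power2_eq_square algebra_simps flip: sum_distrib_left)
qed

lemma coupling_bump:
  fixes S :: "nat \<Rightarrow> nat \<Rightarrow> real" and n m :: nat
  assumes "i < n" and "k < m" and S_sym: "\<forall>k<m. \<forall>r<m. S k r = S r k"
  shows "(\<Sum>k'<m. \<Sum>r\<in>{..<m} - {k'}. S k' r * (\<Sum>i'<n. bump X i k d i' k' * bump X i k d i' r))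
       = (\<Sum>k'<m. \<Sum>r\<in>{..<m} - {k'}. S k' r * (\<Sum>i'<n. X i' k' * X i' r))
         + 2 * d * (\<Sum>r\<in>{..<m} - {k}. S k r * X i r)"
proof -
  have pointwise: "S k' r * (bump X i k d i' k' * bump X i k d i' r)
     = S k' r * (X i' k' * X i' r) + (if k' = k then (if i' = i then d * S k r * X i r else 0) else 0)
       + (if r = k then (if i' = i then d * S k' k * X i k' else 0) else 0)"
    if "r \<noteq> k'" for i' k' r using that by (auto simp: bump_def algebra_simps)
  have row_k: "(\<Sum>k'<m. \<Sum>r\<in>{..<m} - {k'}. \<Sum>i'<n. if k' = k then (if i' = i then d * S k r * X i r else 0) else 0)
      = d * (\<Sum>r\<in>{..<m} - {k}. S k r * X i r)"
    using assms(1,2) by (simp add: sum_if_eq_if_sum sum_distrib_left mult.assoc)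
  have "(\<Sum>k'<m. \<Sum>r\<in>{..<m} - {k'}. \<Sum>i'<n. if r = k then (if i' = i then d * S k' k * X i k' else 0) else 0)
      = (\<Sum>k'<m. if k' \<noteq> k then d * S k' k * X i k' else 0)"
    using assms(1,2) by (intro sum.cong) (simp_all add: sum_if_eq_if_sum)
  also have "\<dots> = (\<Sum>k'\<in>{..<m} - {k}. d * S k' k * X i k')"
    by (subst sum.If_cases) (auto intro!: sum.cong)
  also have "\<dots> = d * (\<Sum>r\<in>{..<m} - {k}. S k r * X i r)"
    unfolding sum_distrib_left using S_sym assms(2) by (intro sum.cong) auto
  finally have column_k: "(\<Sum>k'<m. \<Sum>r\<in>{..<m} - {k'}. \<Sum>i'<n. if r = k then (if i' = i then d * S k' k * X i k' else 0) else 0)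
      = d * (\<Sum>r\<in>{..<m} - {k}. S k r * X i r)" .
  have "(\<Sum>k'<m. \<Sum>r\<in>{..<m} - {k'}. S k' r * (\<Sum>i'<n. bump X i k d i' k' * bump X i k d i' r))
     = (\<Sum>k'<m. \<Sum>r\<in>{..<m} - {k'}. \<Sum>i'<n. S k' r * (X i' k' * X i' r)
         + (if k' = k then (if i' = i then d * S k r * X i r else 0) else 0)
         + (if r = k then (if i' = i then d * S k' k * X i k' else 0) else 0))"
    by (intro sum.cong refl) (simp add: sum_distrib_left pointwise)
  then show ?thesis
    by (simp add: sum.distrib row_k column_k sum_distrib_left mult.assoc)
qed

lemma hm_energy_expand:
  "hm_energy n m W \<gamma> S \<alpha> X =
     - (1/2) * (\<Sum>k<m. \<Sum>i<n. \<Sum>j<n. X i k * W i j * X j k)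
     + (\<Sum>k<m. \<gamma> k * (\<Sum>i<n. X i k))
     + \<alpha>/2 * ((\<Sum>k<m. Ssum m S k * (\<Sum>i<n. (X i k)\<^sup>2))
                - (\<Sum>k<m. \<Sum>r\<in>{..<m} - {k}. S k r * (\<Sum>i<n. X i k * X i r)))"
  unfolding hm_energy_def sum.distrib sum_subtractf[symmetric] sum_distrib_left[symmetric] ..

lemma hm_update_eq_bump:
  "hm_update n m W \<gamma> \<rho> S \<alpha> X i k = bump X i k (hm_update n m W \<gamma> \<rho> S \<alpha> X i k i k - X i k)"
  by (auto simp: hm_update_def bump_def fun_eq_iff)

lemma bump_zero [simp]: "bump X i k 0 = X"
  by (simp add: bump_def)

locale homtask =
  fixes n m :: nat and W S :: "nat \<Rightarrow> nat \<Rightarrow> real" and \<gamma> \<rho> :: "nat \<Rightarrow> real" and \<alpha> :: real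
  assumes W_sym: "\<forall>i<n. \<forall>j<n. W i j = W j i"
    and S_sym: "\<forall>k<m. \<forall>r<m. S k r = S r k"
    and W_diag_nonneg: "\<forall>i<n. 0 \<le> W i i"
    and levels_ordered: "\<forall>k<m. - cos (\<rho> k) < sin (\<rho> k)"
begin

abbreviation energy where "energy \<equiv> hm_energy n m W \<gamma> S \<alpha>"
abbreviation update where "update \<equiv> hm_update n m W \<gamma> \<rho> S \<alpha>"
abbreviation phi where "phi \<equiv> hm_phi n m W \<gamma> \<rho> S \<alpha>"

definition activation :: "(nat \<Rightarrow> nat \<Rightarrow> real) \<Rightarrow> real" where
  "activation X = (\<Sum>k<m. \<Sum>i<n. X i k)"

text \<open>An update with \<open>\<phi>\<^sub>i\<^sub>k = 0\<close> may switch
  \<open>sin \<rho>\<^sub>k\<close> to \<open>-cos \<rho>\<^sub>k\<close> without lowering the energy; the total activation breaks such ties.\<close>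

definition potential :: "(nat \<Rightarrow> nat \<Rightarrow> real) \<Rightarrow> real \<times> real" where
  "potential X = (energy X, activation X)"

lemma activation_bump:
  "i < n \<Longrightarrow> k < m \<Longrightarrow> activation (bump X i k d) = activation X + d"
  using sum_entrywise_bump[of i n k m "\<lambda>_. 1" "\<lambda>_ _ x. x" X d] by (simp add: activation_def)

lemma energy_bump:
  assumes "i < n" and "k < m"
  shows "energy (bump X i k d) = energy X - d * (\<Sum>j<n. W i j * X j k) - W i i * d\<^sup>2 / 2 + \<gamma> k * d
           + \<alpha>/2 * (Ssum m S k * (2 * X i k * d + d\<^sup>2) - 2 * d * (\<Sum>r\<in>{..<m} - {k}. S k r * X i r))"
  unfolding hm_energy_expand
  using quadratic_form_bump[OF assms W_sym, of X d] coupling_bump[OF assms S_sym, of X d]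
    sum_entrywise_bump[OF assms, of \<gamma> "\<lambda>_ _ x. x" X d]
    sum_entrywise_bump[OF assms, of "Ssum m S" "\<lambda>_ _ x. x\<^sup>2" X d]
  by (simp add: power2_eq_square algebra_simps)

lemma energy_update:
  assumes "i < n" and "k < m" and X_ik: "X i k = sin (\<rho> k) \<or> X i k = - cos (\<rho> k)"
  defines "d \<equiv> update X i k i k - X i k"
  shows "energy (update X i k) = energy X - d * phi X i k - W i i * d\<^sup>2 / 2"
proof -
  have "2 * X i k * d + d\<^sup>2 = (X i k + update X i k i k) * d"
    by (simp add: d_def power2_eq_square algebra_simps)
  also have "\<dots> = (sin (\<rho> k) - cos (\<rho> k)) * d"
  proof (cases "d = 0")
    case False
    then have "X i k + update X i k i k = sin (\<rho> k) - cos (\<rho> k)"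
      using X_ik by (auto simp: d_def hm_update_def)
    then show ?thesis by simp
  qed simp
  \<comment> \<open>this is the term that the correction in \<open>hm_theta\<close> cancels\<close>
  finally have threshold_shift: "2 * X i k * d + d\<^sup>2 = (sin (\<rho> k) - cos (\<rho> k)) * d" .
  have "update X i k = bump X i k d"
    unfolding d_def by (rule hm_update_eq_bump)
  then show ?thesis
    using energy_bump[OF assms(1,2), of X d, unfolded threshold_shift]
    by (simp add: hm_phi_def hm_theta_def field_simps)
qed

lemma update_fixes_or_decreases_potential:
  assumes "i < n" and "k < m" and X_ik: "X i k = sin (\<rho> k) \<or> X i k = - cos (\<rho> k)"
  shows "update X i k = X \<or> potential (update X i k) < potential X"
proof -
  define d where "d = update X i k i k - X i k"
  have update_bump: "update X i k = bump X i k d"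
    unfolding d_def by (rule hm_update_eq_bump)
  have gap: "- cos (\<rho> k) < sin (\<rho> k)"
    using levels_ordered assms(2) by blast
  have energy_le: "energy (update X i k) \<le> energy X - d * phi X i k"
    using energy_update[of i k X, OF assms] W_diag_nonneg assms(1) by (simp add: d_def)
  show ?thesis
  proof (cases "d = 0")
    case True
    then show ?thesis by (simp add: update_bump)
  next
    case False
    show ?thesis
    proof (cases "phi X i k > 0")
      case True
      then have "d > 0"
        using X_ik gap \<open>d \<noteq> 0\<close> by (auto simp: d_def hm_update_def)
      with True have "0 < d * phi X i k" by simp
      then have "energy (update X i k) < energy X"
        using energy_le by linarith
      then show ?thesis by (simp add: potential_def)
    next
      case False
      then have "d < 0"
        using X_ik gap \<open>d \<noteq> 0\<close> by (auto simp: d_def hm_update_def)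
      with False have "0 \<le> d * phi X i k" by (simp add: mult_nonpos_nonpos)
      then have "energy (update X i k) \<le> energy X"
        using energy_le by linarith
      moreover have "activation (update X i k) < activation X"
        using \<open>d < 0\<close> activation_bump[OF assms(1,2)] by (simp add: update_bump)
      ultimately show ?thesis by (simp add: potential_def)
    qed
  qed
qed

end

lemma eventually_constant_by_potential:
  fixes f :: "nat \<Rightarrow> 'a" and P :: "'a \<Rightarrow> 'b::linorder"
  assumes "finite (range f)" and descent: "\<And>t. f (Suc t) = f t \<or> P (f (Suc t)) < P (f t)"
  shows "\<exists>t0. \<forall>t\<ge>t0. f t = f t0"
proof -
  have finite_values: "finite (P ` range f)"
    using assms(1) by simp
  then have "Min (P ` range f) \<in> P ` range f"
    by (intro Min_in) auto
  then obtain t0 where t0: "P (f t0) = Min (P ` range f)"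
    by auto
  have "f t = f t0" if "t0 \<le> t" for t
    using that
  proof (induction t rule: dec_induct)
    case (step t)
    have "P (f t0) \<le> P (f (Suc t))"
      using finite_values unfolding t0 by (simp add: Min_le)
    then show ?case
      using descent[of t] step.IH by auto
  qed simp
  then show ?thesis by blast
qed

lemma hm_schedule_in_grid:
  assumes "hm_schedule n m \<sigma>" and "0 < n * m"
  shows "fst (\<sigma> t) < n \<and> snd (\<sigma> t) < m"
proof -
  have "(\<lambda>s. \<sigma> (t div (n * m) * (n * m) + s)) ` {..<n * m} = {..<n} \<times> {..<m}"
    using assms(1) unfolding hm_schedule_def bij_betw_def by blast
  moreover have "t mod (n * m) \<in> {..<n * m}"
    using assms(2) by simp
  ultimately have "\<sigma> (t div (n * m) * (n * m) + t mod (n * m)) \<in> {..<n} \<times> {..<m}"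
    by blast
  then show ?thesis
    unfolding div_mult_mod_eq by (simp add: mem_Times_iff)
qed

lemma hm_schedule_visits:
  assumes "hm_schedule n m \<sigma>" and "i < n" and "k < m"
  shows "\<exists>t\<ge>b * (n * m). \<sigma> t = (i, k)"
proof -
  have "(i, k) \<in> (\<lambda>s. \<sigma> (b * (n * m) + s)) ` {..<n * m}"
    using assms unfolding hm_schedule_def bij_betw_def by auto
  then obtain s where "\<sigma> (b * (n * m) + s) = (i, k)"
    by auto
  then show ?thesis
    by (intro exI[of _ "b * (n * m) + s"]) simp
qed

lemma hm_state_update:
  "hm_state n m \<rho> X \<Longrightarrow> hm_state n m \<rho> (hm_update n m W \<gamma> \<rho> S \<alpha> X i k)"
  by (simp add: hm_state_def hm_update_def)

lemma hm_stable_imp_local_min: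
  "hm_stable n m W \<gamma> \<rho> S \<alpha> X \<Longrightarrow> hm_local_min n m W \<gamma> \<rho> S \<alpha> X"
  by (simp add: hm_stable_def hm_local_min_def)

locale homtask_run = homtask +
  fixes \<sigma> :: "nat \<Rightarrow> nat \<times> nat" and X0 :: "nat \<Rightarrow> nat \<Rightarrow> real"
  assumes schedule: "hm_schedule n m \<sigma>"
    and grid_nonempty: "0 < n * m"
    and initial_state: "hm_state n m \<rho> X0"
begin

abbreviation traj where "traj \<equiv> hm_traj n m W \<gamma> \<rho> S \<alpha> \<sigma> X0"

lemma traj_state: "hm_state n m \<rho> (traj t)"
  by (induction t) (simp_all add: initial_state hm_state_update)

lemma traj_off_grid: "\<not> (i < n \<and> k < m) \<Longrightarrow> traj t i k = X0 i k"
  using hm_schedule_in_grid[OF schedule grid_nonempty]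
  by (induction t) (auto simp: hm_update_def)

lemma finite_range_traj: "finite (range traj)"
proof -
  let ?grid = "{..<n} \<times> {..<m}"
  let ?levels = "(\<lambda>k. sin (\<rho> k)) ` {..<m} \<union> (\<lambda>k. - cos (\<rho> k)) ` {..<m}"
  have "case_prod (traj t) ` ?grid \<subseteq> ?levels" for t
    using traj_state[of t] unfolding hm_state_def by auto
  moreover have "{x. case_prod (traj t) x \<noteq> case_prod X0 x} \<subseteq> ?grid" for t
    using traj_off_grid[of _ _ t] by auto
  ultimately have "range (\<lambda>t. case_prod (traj t)) \<subseteq>
      {f. f ` ?grid \<subseteq> ?levels \<and> {x. f x \<noteq> case_prod X0 x} \<subseteq> ?grid}"
    by blast
  then have "finite (range (\<lambda>t. case_prod (traj t)))"
    by (rule finite_subset) (simp add: finite_restricted_funspace)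
  then have "finite (curry ` range (\<lambda>t. case_prod (traj t)))"
    by (rule finite_imageI)
  then show ?thesis
    by (simp add: image_image)
qed

lemma traj_eventually_constant: "\<exists>t0. \<forall>t\<ge>t0. traj t = traj t0"
proof (rule eventually_constant_by_potential[where P = potential, OF finite_range_traj])
  fix t
  obtain i k where ik: "\<sigma> t = (i, k)"
    by fastforce
  have i: "i < n" and k: "k < m"
    using hm_schedule_in_grid[OF schedule grid_nonempty, of t] unfolding ik by simp_all
  have "traj t i k = sin (\<rho> k) \<or> traj t i k = - cos (\<rho> k)"
    using traj_state[of t] i k unfolding hm_state_def by blast
  moreover have "traj (Suc t) = update (traj t) i k"
    using ik by simp
  ultimately show "traj (Suc t) = traj t \<or> potential (traj (Suc t)) < potential (traj t)"
    using update_fixes_or_decreases_potential[OF i k] by metis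
qed

lemma traj_stable_once_constant:
  assumes "\<forall>t\<ge>t0. traj t = traj t0"
  shows "hm_stable n m W \<gamma> \<rho> S \<alpha> (traj t0)"
  unfolding hm_stable_def
proof (intro allI impI)
  fix i k assume "i < n" and "k < m"
  then obtain t where "t \<ge> t0 * (n * m)" and visit: "\<sigma> t = (i, k)"
    using hm_schedule_visits[OF schedule] by blast
  moreover have "t0 \<le> t0 * (n * m)"
    using grid_nonempty by simp
  ultimately have "t0 \<le> t"
    by linarith
  then have "traj t = traj t0" and "traj (Suc t) = traj t0"
    using assms le_SucI by blast+
  moreover have "traj (Suc t) = update (traj t) i k"
    using visit by simp
  ultimately show "update (traj t0) i k = traj t0"
    by simp
qed

end

theorem theorem1:
  fixes n m :: nat and W S :: "nat \<Rightarrow> nat \<Rightarrow> real" and \<gamma> \<rho> :: "nat \<Rightarrow> real"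
    and \<alpha> :: real and \<sigma> :: "nat \<Rightarrow> nat \<times> nat" and X0 :: "nat \<Rightarrow> nat \<Rightarrow> real"
  assumes "n \<ge> 1" and "m \<ge> 1"
    and "\<forall>i<n. \<forall>j<n. W i j = W j i" and "\<forall>i<n. \<forall>j<n. W i j \<ge> 0"
    and "\<forall>k<m. \<forall>r<m. S k r = S r k" and "\<forall>k<m. \<forall>r<m. 0 \<le> S k r \<and> S k r \<le> 1"
    and "\<forall>k<m. S k k = 0"
    and "\<forall>k<m. pi / 4 \<le> \<rho> k \<and> \<rho> k < pi / 2"
    and "hm_state n m \<rho> X0"
    and "hm_schedule n m \<sigma>"
  shows "\<exists>T. hm_stable n m W \<gamma> \<rho> S \<alpha> (hm_traj n m W \<gamma> \<rho> S \<alpha> \<sigma> X0 T)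
           \<and> hm_local_min n m W \<gamma> \<rho> S \<alpha> (hm_traj n m W \<gamma> \<rho> S \<alpha> \<sigma> X0 T)"
proof -
  have levels_ordered: "- cos (\<rho> k) < sin (\<rho> k)" if "k < m" for k
  proof -
    have "0 < \<rho> k" and "\<rho> k < pi / 2"
      using assms(8) that pi_gt_zero by (auto intro: less_le_trans[of 0 "pi / 4"])
    then show ?thesis
      using sin_gt_zero[of "\<rho> k"] cos_gt_zero_pi[of "\<rho> k"] by simp
  qed
  interpret homtask_run n m W S \<gamma> \<rho> \<alpha> \<sigma> X0
    using assms levels_ordered by unfold_locales auto
  obtain t0 where "\<forall>t\<ge>t0. traj t = traj t0"
    using traj_eventually_constant by blast
  then have "hm_stable n m W \<gamma> \<rho> S \<alpha> (traj t0)"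
    by (rule traj_stable_once_constant)
  then show ?thesis
    using hm_stable_imp_local_min by blast
qed

end
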